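(* Let $f:[0,\infty)\to[0,\infty)$ be continuous and assume its Hirsch function $h_f$ is well defined on $(0,\infty)$. Then the following are equivalent: (a) $h_f(\theta)=f(f(\theta))$ for all $\theta>0$; (b) $f(f(f(x)))=x\,f(f(x))$ for all $x\ge 0$.
   Context: Hirsch function: for $f:[0,\infty)\to[0,\infty)$ and $\theta>0$, $h_f(\theta)=x$ if and only if $f(x)=\theta x$, where, if $f(0)=0$, the trivial solution $x=0$ is not taken into account. It is required (for $h_f$ to be a function) that for every $\theta>0$ this equation has exactly one such solution $x$. *)

theory Defs
  imports "HOL-Analysis.Analysis"
begin

text \<open>Functions f : [0,inf) -> [0,inf) are modelled as real functions; only their values
on {0..} matter.  x is an admissible solution of f x = theta * x if x >= 0, f x = theta * x,
and x is not the trivial solution 0 in the case f 0 = 0.\<close>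

definition hirsch_sol :: "(real \<Rightarrow> real) \<Rightarrow> real \<Rightarrow> real \<Rightarrow> bool" where
  "hirsch_sol f \<theta> x \<longleftrightarrow> x \<ge> 0 \<and> f x = \<theta> * x \<and> \<not> (f 0 = 0 \<and> x = 0)"

definition hirsch_well_defined :: "(real \<Rightarrow> real) \<Rightarrow> bool" where
  "hirsch_well_defined f \<longleftrightarrow> (\<forall>\<theta>>0. \<exists>!x. hirsch_sol f \<theta> x)"

definition hirsch :: "(real \<Rightarrow> real) \<Rightarrow> real \<Rightarrow> real" where
  "hirsch f \<theta> = (THE x. hirsch_sol f \<theta> x)"

end

theory Submission
  imports Defs
begin

text \<open>If \<open>h\<^sub>f(\<theta>) = f (f \<theta>)\<close>, then \<open>f (f \<theta>)\<close> solves \<open>f x = \<theta> x\<close>, which is (b) for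
  \<open>\<theta> > 0\<close>, and (b) at \<open>0\<close> follows by continuity. Conversely (b) says that \<open>f (f \<theta>)\<close> solves
  \<open>f x = \<theta> x\<close>; the only obstruction is that it might be the excluded trivial solution \<open>0\<close>
  when \<open>f 0 = 0\<close>, which would give \<open>f\<close> a positive zero. Such a zero is ruled out: the
  slope \<open>f x / x\<close> is continuous on \<open>(0, \<infinity>)\<close> and attains every positive value exactly
  once, so by the intermediate value theorem \<open>f\<close> either vanishes on a whole interval
  \<open>(0, t]\<close> and is then onto beyond it, or vanishes on \<open>[t, \<infinity>)\<close> and satisfies
  \<open>f x \<ge> x\<close> near \<open>0\<close>; both contradict (b).\<close>

lemma hirsch_solD: "hirsch_sol f \<theta> x \<Longrightarrow> x > 0 \<and> f x = \<theta> * x"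
  unfolding hirsch_sol_def by (metis mult_zero_right order_le_less)

lemma hirsch_solI: "x > 0 \<Longrightarrow> f x = \<theta> * x \<Longrightarrow> hirsch_sol f \<theta> x"
  unfolding hirsch_sol_def by simp

lemma hirsch_sol_hirsch:
  assumes "hirsch_well_defined f" "\<theta> > 0"
  shows "hirsch_sol f \<theta> (hirsch f \<theta>)"
  using assms unfolding hirsch_well_defined_def hirsch_def by (blast intro: theI')

lemma hirsch_eqI:
  assumes "hirsch_well_defined f" "\<theta> > 0" "hirsch_sol f \<theta> x"
  shows "hirsch f \<theta> = x"
  using assms unfolding hirsch_well_defined_def hirsch_def by (blast intro: the1_equality)

lemma hirsch_sol_unique:
  assumes "hirsch_well_defined f" "\<theta> > 0" "hirsch_sol f \<theta> a" "hirsch_sol f \<theta> b"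
  shows "a = b"
  using hirsch_eqI[OF assms(1,2)] assms(3,4) by metis

lemma continuous_on_slope:
  fixes f :: "real \<Rightarrow> real"
  assumes "continuous_on {0..} f" "s > 0"
  shows "continuous_on {s..t} (\<lambda>x. f x / x)"
  using assms by (intro continuous_on_divide continuous_on_id continuous_on_subset[OF assms(1)]) auto

text \<open>Near a positive zero the slope \<open>f x / x\<close> is small on both sides, so a small
  positive slope would be attained twice.\<close>

lemma hirsch_no_zero_between_positive_values:
  fixes f :: "real \<Rightarrow> real"
  assumes cont: "continuous_on {0..} f" and wd: "hirsch_well_defined f"
    and "0 < s" "s < t" "t < q" and "f t = 0" "f s > 0" "f q > 0"
  shows False
proof -
  define c where "c = min (f s / s) (f q / q) / 2"
  have "c > 0"
    using assms by (simp add: c_def)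
  then have c: "c > 0" "c \<le> f s / s" "c \<le> f q / q"
    unfolding c_def by linarith+
  obtain a where a: "s \<le> a" "a \<le> t" "f a / a = c"
    using IVT2'[of "\<lambda>x. f x / x" t c s] continuous_on_slope[OF cont, of s t] assms c by auto
  obtain b where b: "t \<le> b" "b \<le> q" "f b / b = c"
    using IVT'[of "\<lambda>x. f x / x" t c q] continuous_on_slope[OF cont, of t q] assms c by auto
  have "a \<noteq> t" "b \<noteq> t"
    using a b c \<open>f t = 0\<close> by auto
  then have "a < b"
    using a b by linarith
  moreover have "hirsch_sol f c a" "hirsch_sol f c b"
    using a b \<open>0 < s\<close> \<open>s < t\<close> c by (auto intro!: hirsch_solI simp: field_simps)
  ultimately show False
    using hirsch_sol_unique[OF wd \<open>c > 0\<close>] by blast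
qed

lemma hirsch_onto_right_of_zero:
  fixes f :: "real \<Rightarrow> real"
  assumes nonneg: "\<forall>x\<ge>0. f x \<ge> 0" and cont: "continuous_on {0..} f"
    and wd: "hirsch_well_defined f"
    and t: "t > 0" "f t = 0" and q: "q > t" "f q > 0" and "y \<ge> 0"
  shows "\<exists>x\<ge>t. f x = y"
proof -
  have vanish: "f s = 0" if "0 < s" "s \<le> t" for s
  proof (cases "s = t")
    case False
    then have "s < t" "f s \<ge> 0"
      using that nonneg by auto
    then show ?thesis
      using hirsch_no_zero_between_positive_values[OF cont wd \<open>0 < s\<close> _ q(1) t(2) _ q(2)]
      by fastforce
  qed (use t in simp)
  define \<theta> where "\<theta> = (y + 1) / t"
  have "\<theta> > 0"
    using t \<open>y \<ge> 0\<close> by (simp add: \<theta>_def)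
  then obtain x where "hirsch_sol f \<theta> x"
    using hirsch_sol_hirsch[OF wd] by blast
  then have x: "x > 0" "f x = \<theta> * x"
    by (auto dest: hirsch_solD)
  then have "x > t"
    using vanish[of x] \<open>\<theta> > 0\<close> by force
  then have "\<theta> * x \<ge> \<theta> * t"
    using \<open>\<theta> > 0\<close> by simp
  then have "f x \<ge> y"
    using x t by (simp add: \<theta>_def)
  then show ?thesis
    using IVT'[of f t y x] continuous_on_subset[OF cont, of "{t..x}"] t \<open>x > t\<close> \<open>y \<ge> 0\<close> by auto
qed

text \<open>Take \<open>y\<close> with \<open>f y = t\<close> and \<open>x\<close> with \<open>f x = y\<close>: then \<open>f (f (f x)) = 0\<close> while
  \<open>x * f (f x) = x * t > 0\<close>.\<close>

lemma zero_propagates_right: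
  fixes f :: "real \<Rightarrow> real"
  assumes nonneg: "\<forall>x\<ge>0. f x \<ge> 0" and cont: "continuous_on {0..} f"
    and wd: "hirsch_well_defined f" and iter: "\<forall>x\<ge>0. f (f (f x)) = x * f (f x)"
    and t: "t > 0" "f t = 0" and "t \<le> q"
  shows "f q = 0"
proof (rule ccontr)
  assume "f q \<noteq> 0"
  moreover have "f q \<ge> 0"
    using nonneg t \<open>t \<le> q\<close> by simp
  ultimately have q: "q > t" "f q > 0"
    using t \<open>t \<le> q\<close> by (auto simp: order_le_less)
  obtain y where y: "y \<ge> t" "f y = t"
    using hirsch_onto_right_of_zero[OF nonneg cont wd t q, of t] t by auto
  obtain x where x: "x \<ge> t" "f x = y"
    using hirsch_onto_right_of_zero[OF nonneg cont wd t q, of y] y t by auto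
  have "x * t = x * f (f x)"
    using x y by simp
  also have "\<dots> = f (f (f x))"
    using iter[rule_format, of x] x t by simp
  also have "\<dots> = 0"
    using x y t by simp
  finally have "x * t = 0" .
  then show False
    using x t by simp
qed

lemma ge_self_below_fixed_point:
  fixes f :: "real \<Rightarrow> real"
  assumes cont: "continuous_on {0..} f" and wd: "hirsch_well_defined f"
    and "0 < u" "u \<le> r" "r < t" "f r = r" "f t = 0" "f u > 0"
  shows "u \<le> f u"
proof (rule ccontr)
  assume "\<not> u \<le> f u"
  define c where "c = f u / u"
  have c: "0 < c" "c < 1"
    using assms \<open>\<not> u \<le> f u\<close> by (auto simp: c_def field_simps)
  obtain v where v: "r \<le> v" "v \<le> t" "f v / v = c"
    using IVT2'[of "\<lambda>x. f x / x" t c r] continuous_on_slope[OF cont, of r t] assms c by auto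
  have "hirsch_sol f c v"
    using v c assms by (auto intro!: hirsch_solI simp: field_simps)
  moreover have "hirsch_sol f c u"
    using assms by (auto intro!: hirsch_solI simp: c_def)
  ultimately have "u = v"
    using hirsch_sol_unique[OF wd \<open>c > 0\<close>] by blast
  then have "u = r"
    using v assms by simp
  then show False
    using \<open>f r = r\<close> \<open>\<not> u \<le> f u\<close> by simp
qed

lemma continuous_on_atLeast_tendsto_at_right:
  fixes g :: "'a::linorder_topology \<Rightarrow> 'b::topological_space"
  assumes "continuous_on {a..} g"
  shows "(g \<longlongrightarrow> g a) (at_right a)"
  using assms unfolding continuous_on_def by (auto intro: tendsto_within_subset)

lemma continuous_on_atLeast_vanishes_at_endpoint:
  fixes g :: "real \<Rightarrow> real"
  assumes "continuous_on {a..} g" "\<And>x. x > a \<Longrightarrow> g x = 0"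
  shows "g a = 0"
proof -
  have "\<forall>\<^sub>F x in at_right a. g x = 0"
    using eventually_at_right_less by (rule eventually_mono) (use assms(2) in simp)
  then have "(g \<longlongrightarrow> 0) (at_right a)"
    by (simp add: tendsto_eventually)
  then show ?thesis
    using continuous_on_atLeast_tendsto_at_right[OF assms(1)] tendsto_unique trivial_limit_at_right_real
    by blast
qed

text \<open>By \<open>zero_propagates_right\<close> the fixed point \<open>r = h\<^sub>f(1)\<close> lies below the zero,
  and \<open>u \<le> f u\<close> on \<open>(0, r]\<close>; for small \<open>x\<close> this yields
  \<open>f (f x) \<le> f (f (f x)) = x * f (f x) < f (f x)\<close>.\<close>

lemma no_positive_zero:
  fixes f :: "real \<Rightarrow> real"
  assumes nonneg: "\<forall>x\<ge>0. f x \<ge> 0" and cont: "continuous_on {0..} f"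
    and wd: "hirsch_well_defined f" and iter: "\<forall>x\<ge>0. f (f (f x)) = x * f (f x)"
    and f0: "f 0 = 0" and "t > 0"
  shows "f t \<noteq> 0"
proof
  assume "f t = 0"
  note propagate = zero_propagates_right[OF nonneg cont wd iter]
  obtain r where "hirsch_sol f 1 r"
    using hirsch_sol_hirsch[OF wd] zero_less_one by blast
  then have r: "r > 0" "f r = r"
    by (auto dest: hirsch_solD)
  have "r < t"
    using propagate[OF \<open>t > 0\<close> \<open>f t = 0\<close>, of r] r by force
  have pos: "f u > 0" if "0 < u" "u \<le> r" for u
  proof -
    have "f u \<noteq> 0"
      using propagate[OF that(1) _ that(2)] r by auto
    moreover have "f u \<ge> 0"
      using nonneg that by simp
    ultimately show ?thesis
      by simp
  qed
  have ge: "u \<le> f u" if "0 < u" "u \<le> r" for u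
    using ge_self_below_fixed_point[OF cont wd that \<open>r < t\<close> r(2) \<open>f t = 0\<close> pos[OF that]] .
  have "continuous_on {0..} (\<lambda>x. f (f x))"
    using nonneg by (intro continuous_on_compose2[OF cont cont]) auto
  then have "((\<lambda>x. f (f x)) \<longlongrightarrow> 0) (at_right 0)" "(f \<longlongrightarrow> 0) (at_right 0)"
    using continuous_on_atLeast_tendsto_at_right[OF cont] f0
      continuous_on_atLeast_tendsto_at_right[of 0 "\<lambda>x. f (f x)"] by simp_all
  then have "\<forall>\<^sub>F x in at_right 0. x \<in> {0<..<min 1 r} \<and> f x < r \<and> f (f x) < r"
    using eventually_at_right_real[of 0 "min 1 r"] r
    by (intro eventually_conj order_tendstoD(2)) auto
  then have "\<exists>x. x \<in> {0<..<min 1 r} \<and> f x < r \<and> f (f x) < r"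
    by (rule eventually_happens'[OF trivial_limit_at_right_real])
  then obtain x where x: "0 < x" "x < 1" "x < r" "f x < r" "f (f x) < r"
    by auto
  have "f (f x) > 0"
    using x pos by (meson less_imp_le)
  have "f (f x) \<le> f (f (f x))"
    using ge[OF \<open>f (f x) > 0\<close>] x by simp
  also have "\<dots> = x * f (f x)"
    using iter x by simp
  also have "\<dots> < f (f x)"
    using x \<open>f (f x) > 0\<close> by simp
  finally show False
    by simp
qed

lemma hirsch_sol_iterate:
  fixes f :: "real \<Rightarrow> real"
  assumes nonneg: "\<forall>x\<ge>0. f x \<ge> 0" and cont: "continuous_on {0..} f"
    and wd: "hirsch_well_defined f" and iter: "\<forall>x\<ge>0. f (f (f x)) = x * f (f x)"
    and "\<theta> > 0"
  shows "hirsch_sol f \<theta> (f (f \<theta>))"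
proof -
  note no_zero = no_positive_zero[OF nonneg cont wd iter]
  have "f (f \<theta>) \<noteq> 0" if "f 0 = 0"
  proof -
    have "f \<theta> \<noteq> 0" "f \<theta> \<ge> 0"
      using no_zero[OF that \<open>\<theta> > 0\<close>] nonneg \<open>\<theta> > 0\<close> by simp_all
    then show ?thesis
      using no_zero[OF that, of "f \<theta>"] by simp
  qed
  then show ?thesis
    using nonneg iter \<open>\<theta> > 0\<close> by (auto simp: hirsch_sol_def)
qed

theorem theorem4:
  fixes f :: "real \<Rightarrow> real"
  assumes "\<forall>x\<ge>0. f x \<ge> 0"
    and "continuous_on {0..} f"
    and "hirsch_well_defined f"
  shows "(\<forall>\<theta>>0. hirsch f \<theta> = f (f \<theta>)) \<longleftrightarrow> (\<forall>x\<ge>0. f (f (f x)) = x * f (f x))"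
proof
  assume hirsch_iter: "\<forall>\<theta>>0. hirsch f \<theta> = f (f \<theta>)"
  have "continuous_on {0..} (\<lambda>x. f (f (f x)) - x * f (f x))"
    using assms(1) by (intro continuous_intros continuous_on_compose2[OF assms(2)]) auto
  moreover have "f (f (f x)) - x * f (f x) = 0" if "x > 0" for x
    using hirsch_sol_hirsch[OF assms(3) that] hirsch_iter that by (simp add: hirsch_sol_def)
  ultimately have "f (f (f x)) - x * f (f x) = 0" if "x \<ge> 0" for x
    using continuous_on_atLeast_vanishes_at_endpoint[of 0 "\<lambda>x. f (f (f x)) - x * f (f x)"] that
    by (cases "x = 0") auto
  then show "\<forall>x\<ge>0. f (f (f x)) = x * f (f x)"
    by simp
next
  assume "\<forall>x\<ge>0. f (f (f x)) = x * f (f x)"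
  then show "\<forall>\<theta>>0. hirsch f \<theta> = f (f \<theta>)"
    using hirsch_eqI[OF assms(3)] hirsch_sol_iterate[OF assms] by blast
qed

end
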